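(* Let $n\ge k\ge1$, $l\ge0$, $d=2^n$, $\gamma=3/4$, $\nu=1/2$, and $$\alpha_k=\frac{d^2(d+3)(d\gamma^k+3\nu^k)-4(d+1)(d+2)}{(d^2-1)(d+2)(d+4)},\qquad \beta_k=\frac{d^2(d^2\gamma^k-4)+4}{(d^2-1)(d^2-4)},$$ where for $n=1$ the value of $\beta_1$ is understood as the limit $d\to2$ of the formula $\beta_1=\frac{3d^2-4}{4(d^2-1)}$ (i.e. $\beta_1=\frac{3d^2-4}{4(d^2-1)}$ in general). Then $\alpha_k$ and $\beta_k$ are monotonically increasing in $d$ (over $d=2^n$, $n\ge k$) and monotonically decreasing in $k$; $\lim_{d\to\infty}\alpha_k=\lim_{d\to\infty}\beta_k=\gamma^k$; $0<\alpha_k<\gamma^k$ and $0<\beta_k<\gamma^k$; and $$\gamma^{kl}\Bigl[1-\frac{kl(3d+1)}{3(d^2-1)}\Bigr]\le\alpha_1^{kl}\le\alpha_k^l\le\beta_k^l\le\beta_1^{kl}\le\alpha_1^{kl}+\frac{kld}{d^2-1}\gamma^{kl}.$$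
   Context: Note that $\alpha_1=\frac{3d^2-3d-4}{4(d^2-1)}$ and $\beta_1=\frac{3d^2-4}{4(d^2-1)}$. *)

theory Defs
  imports Complex_Main
begin

definition gam :: real where "gam = 3/4"
definition nuu :: real where "nuu = 1/2"

definition dim :: "nat \<Rightarrow> real" where "dim n = 2 ^ n"

definition alph :: "nat \<Rightarrow> nat \<Rightarrow> real" where
  "alph n k = (let d = dim n in
     (d^2 * (d + 3) * (d * gam ^ k + 3 * nuu ^ k) - 4 * (d + 1) * (d + 2))
     / ((d^2 - 1) * (d + 2) * (d + 4)))"

text \<open>For k = 1 the formula is replaced by its simplified form
  (3d^2 - 4)/(4(d^2 - 1)), which agrees with the general one for d \<noteq> 2
  and gives the limit value at d = 2 (n = 1).\<close>
definition bet :: "nat \<Rightarrow> nat \<Rightarrow> real" where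
  "bet n k = (let d = dim n in
     if k = 1 then (3 * d^2 - 4) / (4 * (d^2 - 1))
     else (d^2 * (d^2 * gam ^ k - 4) + 4) / ((d^2 - 1) * (d^2 - 4)))"

end

theory Submission
  imports Defs "HOL-Real_Asymp.Real_Asymp"
begin

(* With d = 2^n, alph n k and bet n k are rational functions of d evaluated at x = gamma^k and
   y = nu^k; the first is increasing in x and y, the second in x. Decrease in k is therefore
   monotonicity in (x, y), while the bounds by gamma^k and alpha_k <= beta_k are sign conditions
   on polynomials once the denominators are cleared. Both functions grow with d (beta for all
   real d >= 4, alpha along d -> 2d) and tend to x as d -> infinity.
   The chain of powers rests on the one-step inequalities alpha_1 alpha_k <= alpha_(k+1) and
   beta_(k+1) <= beta_1 beta_k, on Bernoulli's inequality for
   alpha_1 = gamma (1 - (3d+1)/(3(d^2-1))), and on b^m - a^m <= m (b - a) c^(m-1) applied with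
   beta_1 - alpha_1 = gamma d/(d^2-1). *)

lemma divide_le_divide_cross:
  fixes a b c e :: real
  shows "0 < b \<Longrightarrow> 0 < e \<Longrightarrow> a * e \<le> c * b \<Longrightarrow> a / b \<le> c / e"
  by (simp add: divide_simps mult.commute)

lemma power_diff_le:
  fixes a b c :: real
  assumes "0 \<le> a" "a \<le> b" "b \<le> c"
  shows "b ^ Suc n - a ^ Suc n \<le> real (Suc n) * (b - a) * c ^ n"
proof -
  have "(\<Sum>p<Suc n. b ^ p * a ^ (n - p)) \<le> (\<Sum>p<Suc n. c ^ p * c ^ (n - p))"
    using assms by (intro sum_mono mult_mono power_mono) auto
  also have "\<dots> = real (Suc n) * c ^ n"
    by (simp add: power_add[symmetric])
  finally have "(b - a) * (\<Sum>p<Suc n. b ^ p * a ^ (n - p)) \<le> (b - a) * (real (Suc n) * c ^ n)"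
    using assms by (intro mult_left_mono) auto
  then show ?thesis
    unfolding diff_power_eq_sum by (simp add: algebra_simps)
qed

section \<open>Rational functions of the dimension\<close>

definition alpha_fun :: "real \<Rightarrow> real \<Rightarrow> real \<Rightarrow> real" where
  "alpha_fun d x y =
     (d^2 * (d + 3) * (d * x + 3 * y) - 4 * (d + 1) * (d + 2)) / ((d^2 - 1) * (d + 2) * (d + 4))"

definition beta_fun :: "real \<Rightarrow> real \<Rightarrow> real" where
  "beta_fun d x = (d^2 * (d^2 * x - 4) + 4) / ((d^2 - 1) * (d^2 - 4))"

definition beta1_fun :: "real \<Rightarrow> real" where
  "beta1_fun d = (3 * d^2 - 4) / (4 * (d^2 - 1))"

lemma alpha_denom_pos: "1 < d \<Longrightarrow> 0 < (d^2 - 1) * (d + 2) * (d + (4::real))"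
  using one_less_power[of d 2] by simp

lemma beta_denom_pos: "2 < d \<Longrightarrow> 0 < (d^2 - 1) * (d^2 - (4::real))"
  using power_strict_mono[of 2 d 2] by simp

lemma alpha_fun_one:
  assumes "1 < d"
  shows "alpha_fun d (3/4) (1/2) = (3 * d^2 - 3 * d - 4) / (4 * (d^2 - 1))"
proof -
  have "4 * (d^2 - 1) \<noteq> 0"
    using one_less_power[OF assms, of 2] by simp
  then show ?thesis
    using alpha_denom_pos[OF assms] unfolding alpha_fun_def by (subst frac_eq_eq) (auto, algebra)
qed

lemma beta_fun_three_quarters:
  assumes "2 < d"
  shows "beta_fun d (3/4) = beta1_fun d"
proof -
  have "4 * (d^2 - 1) \<noteq> 0"
    using power_strict_mono[of 2 d 2] assms by simp
  then show ?thesis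
    using beta_denom_pos[OF assms] unfolding beta_fun_def beta1_fun_def
    by (subst frac_eq_eq) (auto, algebra)
qed

lemma alpha_fun_pos:
  assumes d: "2 \<le> d" and x: "3/2 \<le> d * x" and y: "1 \<le> d * y"
  shows "0 < alpha_fun d x y"
proof -
  have "d * (d + 3) * (3/2 * d + 3) \<le> d * (d + 3) * (d * (d * x) + 3 * (d * y))"
    using d x y by (intro mult_left_mono add_mono) auto
  moreover have "d^2 * (d + 3) * (d * x + 3 * y) = d * (d + 3) * (d * (d * x) + 3 * (d * y))"
    by algebra
  moreover have "d * (d + 3) * (3/2 * d + 3) - 4 * (d + 1) * (d + 2) = (d + 2) * (3/2 * d^2 + 1/2 * d - 4)"
    by algebra
  moreover have "0 < (d + 2) * (3/2 * d^2 + 1/2 * d - 4)"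
    using d power_mono[of 2 d 2] by simp
  ultimately have "0 < d^2 * (d + 3) * (d * x + 3 * y) - 4 * (d + 1) * (d + 2)"
    by linarith
  then show ?thesis
    using alpha_denom_pos[of d] d unfolding alpha_fun_def by simp
qed

lemma alpha_fun_less:
  assumes d: "2 \<le> d" and y: "0 \<le> y" "3 * y \<le> 2 * x" and x: "x \<le> 1"
  shows "alpha_fun d x y < x"
proof -
  have eq: "x * ((d^2 - 1) * (d + 2) * (d + 4)) - (d^2 * (d + 3) * (d * x + 3 * y) - 4 * (d + 1) * (d + 2))
      = (d + 2) * (x * ((d - 2) * (d + 1)) + 4 * d + 4 - 2 * x) + d^2 * (d + 3) * (2 * x - 3 * y)"
    by algebra
  have "0 \<le> x * ((d - 2) * (d + 1))"
    using d y by simp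
  then have "0 < (d + 2) * (x * ((d - 2) * (d + 1)) + 4 * d + 4 - 2 * x)"
    using d x by (intro mult_pos_pos) auto
  moreover have "0 \<le> d^2 * (d + 3) * (2 * x - 3 * y)"
    using d y by auto
  ultimately have "0 < x * ((d^2 - 1) * (d + 2) * (d + 4))
      - (d^2 * (d + 3) * (d * x + 3 * y) - 4 * (d + 1) * (d + 2))"
    unfolding eq by linarith
  then show ?thesis
    using alpha_denom_pos[of d] d unfolding alpha_fun_def by (simp add: divide_less_eq)
qed

lemma beta_fun_less:
  assumes d: "4 \<le> d" and x: "x \<le> 3/4"
  shows "beta_fun d x < x"
proof -
  have eq: "x * ((d^2 - 1) * (d^2 - 4)) - (d^2 * (d^2 * x - 4) + 4) = 4 * d^2 - 4 - x * (5 * d^2 - 4)"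
    by algebra
  have "16 \<le> d^2"
    using d power_mono[of 4 d 2] by simp
  moreover have "x * (5 * d^2 - 4) \<le> 3/4 * (5 * d^2 - 4)"
    using x \<open>16 \<le> d^2\<close> by (intro mult_right_mono) auto
  moreover have "3/4 * (5 * d^2 - 4) = 15/4 * d^2 - 3"
    by simp
  ultimately have "0 < x * ((d^2 - 1) * (d^2 - 4)) - (d^2 * (d^2 * x - 4) + 4)"
    unfolding eq by linarith
  then show ?thesis
    using beta_denom_pos[of d] d unfolding beta_fun_def by (simp add: divide_less_eq)
qed

lemma alpha_fun_le_beta_fun:
  assumes d: "4 \<le> d" and x: "9 * y \<le> 4 * x" and y: "1 \<le> d * y"
  shows "alpha_fun d x y \<le> beta_fun d x"
proof -
  have eq: "(d^2 * (d^2 * x - 4) + 4) * ((d^2 - 1) * (d + 2) * (d + 4))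
      - (d^2 * (d + 3) * (d * x + 3 * y) - 4 * (d + 1) * (d + 2)) * ((d^2 - 1) * (d^2 - 4))
      = 3 * d * (d^2 - 1) * (d + 2) * (d^2 * (d + 2) * (x - 9/4 * y)
          + (d * y - 1) * (5/4 * d^2 + 7/2 * d + 6) + 5/4 * d^2 - 1/2 * d + 2)"
    by algebra
  have "4 * d \<le> d^2"
    using mult_right_mono[OF d, of d] d by (simp add: power2_eq_square)
  moreover have "0 \<le> d^2 * (d + 2) * (x - 9/4 * y)" and "0 \<le> (d * y - 1) * (5/4 * d^2 + 7/2 * d + 6)"
    using d x y by auto
  ultimately have "0 \<le> d^2 * (d + 2) * (x - 9/4 * y)
      + (d * y - 1) * (5/4 * d^2 + 7/2 * d + 6) + 5/4 * d^2 - 1/2 * d + 2"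
    using d by linarith
  moreover have "0 < 3 * d * (d^2 - 1) * (d + 2)"
    using d power_mono[of 4 d 2] by simp
  ultimately have "0 \<le> (d^2 * (d^2 * x - 4) + 4) * ((d^2 - 1) * (d + 2) * (d + 4))
      - (d^2 * (d + 3) * (d * x + 3 * y) - 4 * (d + 1) * (d + 2)) * ((d^2 - 1) * (d^2 - 4))"
    unfolding eq by simp
  then show ?thesis
    unfolding alpha_fun_def beta_fun_def using d
    by (intro divide_le_divide_cross alpha_denom_pos beta_denom_pos) auto
qed

lemma alpha_fun_mono:
  assumes d: "1 < d" and "x \<le> x'" "y \<le> y'"
  shows "alpha_fun d x y \<le> alpha_fun d x' y'"
proof -
  have "d^2 * (d + 3) * (d * x + 3 * y) \<le> d^2 * (d + 3) * (d * x' + 3 * y')"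
    using assms by (intro mult_left_mono add_mono) auto
  then show ?thesis
    unfolding alpha_fun_def using alpha_denom_pos[OF d] by (intro divide_right_mono) auto
qed

lemma beta_fun_mono:
  assumes d: "2 < d" and "x \<le> x'"
  shows "beta_fun d x \<le> beta_fun d x'"
proof -
  have "d^2 * (d^2 * x - 4) + 4 \<le> d^2 * (d^2 * x' - 4) + 4"
    using assms by (intro add_right_mono mult_left_mono diff_right_mono) auto
  then show ?thesis
    unfolding beta_fun_def using beta_denom_pos[OF d] by (intro divide_right_mono) auto
qed

lemma alpha_fun_one_mono:
  assumes d: "1 < d" and "d \<le> d'"
  shows "alpha_fun d (3/4) (1/2) \<le> alpha_fun d' (3/4) (1/2)"
proof -
  have "(3 * d'^2 - 3 * d' - 4) * (4 * (d^2 - 1)) - (3 * d^2 - 3 * d - 4) * (4 * (d'^2 - 1))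
      = 4 * (d' - d) * (3 * d * d' + d + d' + 3)"
    by algebra
  moreover have "0 \<le> 4 * (d' - d) * (3 * d * d' + d + d' + 3)"
    using assms by simp
  ultimately have "(3 * d^2 - 3 * d - 4) * (4 * (d'^2 - 1)) \<le> (3 * d'^2 - 3 * d' - 4) * (4 * (d^2 - 1))"
    by linarith
  moreover have "1 < d^2" "1 < d'^2"
    using assms one_less_power[of _ 2] by auto
  moreover have d': "1 < d'"
    using assms by simp
  ultimately show ?thesis
    unfolding alpha_fun_one[OF d] alpha_fun_one[OF d'] by (intro divide_le_divide_cross) auto
qed

lemma beta1_fun_mono:
  assumes d: "1 < d" and "d \<le> d'"
  shows "beta1_fun d \<le> beta1_fun d'"
proof -
  have "(3 * d'^2 - 4) * (4 * (d^2 - 1)) - (3 * d^2 - 4) * (4 * (d'^2 - 1)) = 4 * (d' - d) * (d' + d)"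
    by algebra
  moreover have "0 \<le> 4 * (d' - d) * (d' + d)"
    using assms by simp
  ultimately have "(3 * d^2 - 4) * (4 * (d'^2 - 1)) \<le> (3 * d'^2 - 4) * (4 * (d^2 - 1))"
    by linarith
  moreover have "1 < d^2" "1 < d'^2"
    using assms one_less_power[of _ 2] by auto
  ultimately show ?thesis
    unfolding beta1_fun_def by (intro divide_le_divide_cross) auto
qed

lemma alpha_fun_submult:
  assumes d: "1 < d"
    and G: "4 * (d + 1) * (d + 2) \<le> d^2 * (3 * d + 1) * x - 3 * d * (d^2 - 3 * d - 2) * y"
  shows "alpha_fun d (3/4) (1/2) * alpha_fun d x y \<le> alpha_fun d (3/4 * x) (y / 2)"
proof -
  define N where "N x y = d^2 * (d + 3) * (d * x + 3 * y) - 4 * (d + 1) * (d + 2)" for x y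
  define P where "P = (d^2 - 1) * (d + 2) * (d + 4)"
  have "4 * (d^2 - 1) * N (3/4 * x) (y / 2) - (3 * d^2 - 3 * d - 4) * N x y
      = d * (d + 3) * (d^2 * (3 * d + 1) * x - 3 * d * (d^2 - 3 * d - 2) * y - 4 * (d + 1) * (d + 2))"
    unfolding N_def by algebra
  moreover have "0 \<le> d * (d + 3) * (d^2 * (3 * d + 1) * x - 3 * d * (d^2 - 3 * d - 2) * y - 4 * (d + 1) * (d + 2))"
    using d G by simp
  ultimately have "(3 * d^2 - 3 * d - 4) * N x y / (4 * (d^2 - 1) * P)
      \<le> 4 * (d^2 - 1) * N (3/4 * x) (y / 2) / (4 * (d^2 - 1) * P)"
    using d alpha_denom_pos[OF d] one_less_power[OF d, of 2] unfolding P_def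
    by (intro divide_right_mono) auto
  moreover have "4 * (d^2 - 1) \<noteq> 0"
    using one_less_power[OF d, of 2] by simp
  ultimately show ?thesis
    unfolding alpha_fun_one[OF d] unfolding alpha_fun_def N_def[symmetric] P_def[symmetric]
    by (simp add: times_divide_times_eq)
qed

lemma beta_fun_submult:
  assumes d: "4 \<le> d" and x: "x \<le> 3"
  shows "beta_fun d (3/4 * x) \<le> beta1_fun d * beta_fun d x"
proof -
  define N where "N x = d^2 * (d^2 * x - 4) + 4" for x
  define Q where "Q = (d^2 - 1) * (d^2 - 4)"
  have "16 \<le> d^2"
    using d power_mono[of 4 d 2] by simp
  have eq: "(3 * d^2 - 4) * N x - 4 * (d^2 - 1) * N (3/4 * x) = d^2 * (d^2 * (4 - x) - 4)"
    unfolding N_def by algebra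
  have "16 \<le> d^2 * (4 - x)"
    using \<open>16 \<le> d^2\<close> x mult_mono[of 16 "d^2" 1 "4 - x"] by simp
  then have "0 \<le> (3 * d^2 - 4) * N x - 4 * (d^2 - 1) * N (3/4 * x)"
    unfolding eq by simp
  then have "4 * (d^2 - 1) * N (3/4 * x) / (4 * (d^2 - 1) * Q)
      \<le> (3 * d^2 - 4) * N x / (4 * (d^2 - 1) * Q)"
    using d beta_denom_pos[of d] \<open>16 \<le> d^2\<close> unfolding Q_def
    by (intro divide_right_mono) auto
  moreover have "4 * (d^2 - 1) \<noteq> 0"
    using \<open>16 \<le> d^2\<close> by simp
  ultimately show ?thesis
    unfolding beta1_fun_def beta_fun_def N_def[symmetric] Q_def[symmetric]
    by (simp add: times_divide_times_eq)
qed

(* alpha = x F/3 + (y - 4x/9) B - C, where F increases and B, C decrease along d -> 2d, and the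
   coefficient of B is nonpositive. *)
lemma alpha_fun_le_double:
  assumes d: "4 \<le> d" and x: "0 \<le> x" and y: "9 * y \<le> 4 * x"
  shows "alpha_fun d x y \<le> alpha_fun (2 * d) x y"
proof -
  define P where "P e = (e^2 - 1) * (e + 2) * (e + 4)" for e :: real
  define F where "F e = e^2 * (e + 3) * (3 * e + 4) / P e" for e
  define B where "B e = 3 * e^2 * (e + 3) / P e" for e
  define C where "C e = 4 * (e + 1) * (e + 2) / P e" for e
  have P: "0 < P d" "0 < P (2 * d)"
    using d alpha_denom_pos[of d] alpha_denom_pos[of "2 * d"] unfolding P_def by auto
  have split: "alpha_fun e x y = x / 3 * F e + (y - 4/9 * x) * B e - C e" for e
  proof -
    have num: "e^2 * (e + 3) * (e * x + 3 * y) - 4 * (e + 1) * (e + 2)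
        = x / 3 * (e^2 * (e + 3) * (3 * e + 4)) + (y - 4/9 * x) * (3 * e^2 * (e + 3)) - 4 * (e + 1) * (e + 2)"
      by (simp add: algebra_simps)
    show ?thesis
      unfolding alpha_fun_def F_def B_def C_def P_def num
      by (simp only: add_divide_distrib diff_divide_distrib times_divide_eq_right)
  qed
  have "(2 * d)^2 * (2 * d + 3) * (3 * (2 * d) + 4) * P d - d^2 * (d + 3) * (3 * d + 4) * P (2 * d)
      = 4 * d^2 * (d + 1) * (d + 2) * ((d - 4) * (10 * d^2 + 37 * d + 93) + 336)"
    unfolding P_def by algebra
  moreover have "0 \<le> 4 * d^2 * (d + 1) * (d + 2) * ((d - 4) * (10 * d^2 + 37 * d + 93) + 336)"
    using d by simp
  ultimately have "F d \<le> F (2 * d)"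
    unfolding F_def by (intro divide_le_divide_cross P) linarith
  have "3 * d^2 * (d + 3) * P (2 * d) - 3 * (2 * d)^2 * (2 * d + 3) * P d
      = 12 * d^2 * (d + 1) * (d + 2) * (2 * d * (d^2 - 1) + 3 * d^2 + 9)"
    unfolding P_def by algebra
  moreover have "0 \<le> 12 * d^2 * (d + 1) * (d + 2) * (2 * d * (d^2 - 1) + 3 * d^2 + 9)"
    using d one_le_power[of d 2] by simp
  ultimately have "B (2 * d) \<le> B d"
    unfolding B_def by (intro divide_le_divide_cross P) linarith
  have "4 * (d + 1) * (d + 2) * P (2 * d) - 4 * (2 * d + 1) * (2 * d + 2) * P d
      = 24 * d * (d + 1)^3 * (d + 2) * (2 * d + 1)"
    unfolding P_def by algebra
  moreover have "0 \<le> 24 * d * (d + 1)^3 * (d + 2) * (2 * d + 1)"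
    using d by simp
  ultimately have "C (2 * d) \<le> C d"
    unfolding C_def by (intro divide_le_divide_cross P) linarith
  moreover have "x / 3 * F d \<le> x / 3 * F (2 * d)"
    using x \<open>F d \<le> F (2 * d)\<close> by (intro mult_left_mono) auto
  moreover have "(y - 4/9 * x) * B d \<le> (y - 4/9 * x) * B (2 * d)"
    using y \<open>B (2 * d) \<le> B d\<close> by (intro mult_left_mono_neg) auto
  ultimately show ?thesis
    unfolding split by linarith
qed

(* In u = d^2 the cross-multiplied difference is (u' - u) times a factor that decreases in x,
   so it suffices to check that factor at x = 9/16. *)
lemma beta_fun_mono_dim:
  assumes d: "4 \<le> d" "d \<le> d'" and x: "x \<le> 9/16"
  shows "beta_fun d x \<le> beta_fun d' x"
proof -
  define u u' where "u = d^2" and "u' = d'^2"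
  have u: "16 \<le> u" "u \<le> u'"
    unfolding u_def u'_def using d power_mono[of 4 d 2] power_mono[of d d' 2] by auto
  have eq: "(u' * (u' * x - 4) + 4) * ((u - 1) * (u - 4)) - (u * (u * x - 4) + 4) * ((u' - 1) * (u' - 4))
      = (u' - u) * ((9/16 - x) * (4 * (u - 1) * (u' - 1) + u * u' - 4)
          + ((u - 2) * (19 * u' - 28) + 10 * u' + 8) / 16)"
    by algebra
  have "0 \<le> 4 * (u - 1) * (u' - 1)" "16 * 16 \<le> u * u'"
    using u mult_mono[of 16 u 16 u'] by simp_all
  then have "0 \<le> (9/16 - x) * (4 * (u - 1) * (u' - 1) + u * u' - 4)"
    using x by (intro mult_nonneg_nonneg) auto
  moreover have "0 \<le> ((u - 2) * (19 * u' - 28) + 10 * u' + 8) / 16"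
    using u by simp
  ultimately have "0 \<le> (9/16 - x) * (4 * (u - 1) * (u' - 1) + u * u' - 4)
      + ((u - 2) * (19 * u' - 28) + 10 * u' + 8) / 16"
    by (rule add_nonneg_nonneg)
  then have "0 \<le> (u' * (u' * x - 4) + 4) * ((u - 1) * (u - 4)) - (u * (u * x - 4) + 4) * ((u' - 1) * (u' - 4))"
    unfolding eq using u by simp
  then have "(u * (u * x - 4) + 4) * ((u' - 1) * (u' - 4)) \<le> (u' * (u' * x - 4) + 4) * ((u - 1) * (u - 4))"
    by linarith
  moreover have "0 < (u - 1) * (u - 4)" "0 < (u' - 1) * (u' - 4)"
    using u by simp_all
  ultimately show ?thesis
    unfolding beta_fun_def u_def[symmetric] u'_def[symmetric] by (intro divide_le_divide_cross)
qed

lemma alpha_fun_tendsto: "((\<lambda>d. alpha_fun d x y) \<longlongrightarrow> x) at_top"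
  unfolding alpha_fun_def by real_asymp

lemma beta_fun_tendsto: "((\<lambda>d. beta_fun d x) \<longlongrightarrow> x) at_top"
  unfolding beta_fun_def by real_asymp

section \<open>The sequences alph and bet\<close>

lemma dim_Suc: "dim (Suc n) = 2 * dim n"
  by (simp add: dim_def)

lemma dim_mono: "n \<le> n' \<Longrightarrow> dim n \<le> dim n'"
  unfolding dim_def by (rule power_increasing) auto

lemma two_le_dim: "1 \<le> n \<Longrightarrow> 2 \<le> dim n"
  using dim_mono[of 1 n] by (simp add: dim_def)

lemma four_le_dim: "2 \<le> n \<Longrightarrow> 4 \<le> dim n"
  using dim_mono[of 2 n] by (simp add: dim_def)

lemma filterlim_dim: "filterlim dim at_top sequentially"
  unfolding dim_def by real_asymp

lemma dim_mult_nuu_power: "k \<le> n \<Longrightarrow> dim n * nuu ^ k = 2 ^ (n - k)"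
  by (simp add: dim_def nuu_def power_diff power_one_over)

lemma one_le_dim_mult_nuu_power: "k \<le> n \<Longrightarrow> 1 \<le> dim n * nuu ^ k"
  using dim_mult_nuu_power by simp

lemma gam_power_le: "1 \<le> k \<Longrightarrow> gam ^ k \<le> 3/4"
  using power_decreasing[of 1 k gam] by (simp add: gam_def)

lemma nuu_power_le_gam_power: "j \<le> k \<Longrightarrow> (3/2) ^ j * nuu ^ k \<le> gam ^ k"
proof -
  assume "j \<le> k"
  then have "(3/2 :: real) ^ j \<le> (3/2) ^ k"
    by (rule power_increasing) simp
  moreover have "(3/4 :: real) ^ k = (3/2) ^ k * (1/2) ^ k"
    by (simp add: power_mult_distrib[symmetric])
  ultimately show ?thesis
    unfolding gam_def nuu_def by (simp add: mult_right_mono)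
qed

lemma alph_eq: "alph n k = alpha_fun (dim n) (gam ^ k) (nuu ^ k)"
  by (simp add: alph_def alpha_fun_def Let_def)

lemma bet_one: "bet n 1 = beta1_fun (dim n)"
  by (simp add: bet_def beta1_fun_def Let_def)

(* At d = 2 the general formula for beta divides by zero; from d = 4 on it covers k = 1 too. *)
lemma bet_eq:
  assumes "2 \<le> n"
  shows "bet n k = beta_fun (dim n) (gam ^ k)"
proof (cases "k = 1")
  case True
  show ?thesis
    using four_le_dim[OF assms] beta_fun_three_quarters[of "dim n"] unfolding True bet_one
    by (simp add: gam_def)
qed (simp add: bet_def beta_fun_def Let_def)

lemma alph_tendsto: "(\<lambda>n. alph n k) \<longlonglongrightarrow> gam ^ k"
  unfolding alph_eq by (rule filterlim_compose[OF alpha_fun_tendsto filterlim_dim])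

lemma bet_tendsto: "(\<lambda>n. bet n k) \<longlonglongrightarrow> gam ^ k"
proof -
  have "(\<lambda>n. beta_fun (dim n) (gam ^ k)) \<longlonglongrightarrow> gam ^ k"
    by (rule filterlim_compose[OF beta_fun_tendsto filterlim_dim])
  moreover have "eventually (\<lambda>n. beta_fun (dim n) (gam ^ k) = bet n k) sequentially"
    unfolding eventually_sequentially using bet_eq by metis
  ultimately show ?thesis
    by (rule Lim_transform_eventually)
qed

lemma alph_bounds:
  assumes "1 \<le> k" "k \<le> n"
  shows "0 < alph n k \<and> alph n k < gam ^ k"
proof -
  have xy: "3/2 * nuu ^ k \<le> gam ^ k"
    using nuu_power_le_gam_power[of 1 k] assms by simp
  have dy: "1 \<le> dim n * nuu ^ k"
    using one_le_dim_mult_nuu_power assms by simp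
  have "3/2 * 1 \<le> 3/2 * (dim n * nuu ^ k)"
    using dy by simp
  also have "\<dots> \<le> dim n * gam ^ k"
    using xy two_le_dim[of n] assms mult_left_mono[OF xy, of "dim n"] by simp
  finally have "0 < alph n k"
    unfolding alph_eq using two_le_dim[of n] dy assms by (intro alpha_fun_pos) auto
  moreover have "alph n k < gam ^ k"
    unfolding alph_eq using two_le_dim[of n] xy gam_power_le[OF assms(1)] assms
    by (intro alpha_fun_less) (auto simp: nuu_def)
  ultimately show ?thesis ..
qed

lemma alph_le_bet:
  assumes "1 \<le> k" "k \<le> n"
  shows "alph n k \<le> bet n k"
proof (cases "k = 1")
  case True
  have "1 < dim n"
    using two_le_dim[of n] assms by simp
  then show ?thesis
    unfolding True alph_eq bet_one using alpha_fun_one[of "dim n"] one_less_power[of "dim n" 2]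
    by (simp add: gam_def nuu_def beta1_fun_def divide_right_mono)
next
  case False
  then have "2 \<le> k" "2 \<le> n"
    using assms by auto
  then show ?thesis
    unfolding alph_eq bet_eq[OF \<open>2 \<le> n\<close>]
    using four_le_dim[of n] nuu_power_le_gam_power[of 2 k] one_le_dim_mult_nuu_power assms
    by (intro alpha_fun_le_beta_fun) (auto simp: power2_eq_square)
qed

lemma bet_bounds:
  assumes "1 \<le> k" "k \<le> n"
  shows "0 < bet n k \<and> bet n k < gam ^ k"
proof
  show "0 < bet n k"
    using alph_bounds alph_le_bet assms by fastforce
  show "bet n k < gam ^ k"
  proof (cases "k = 1")
    case True
    have "1 < (dim n)^2"
      using two_le_dim[of n] assms one_less_power[of "dim n" 2] by simp
    then show ?thesis
      unfolding True bet_one beta1_fun_def by (simp add: gam_def divide_less_eq)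
  next
    case False
    then have "2 \<le> n"
      using assms by auto
    then show ?thesis
      unfolding bet_eq[OF \<open>2 \<le> n\<close>] using four_le_dim gam_power_le assms
      by (intro beta_fun_less) auto
  qed
qed

lemma alph_antimono:
  assumes "1 \<le> n" "k \<le> k'"
  shows "alph n k' \<le> alph n k"
  unfolding alph_eq using two_le_dim[OF assms(1)] assms(2)
  by (intro alpha_fun_mono power_decreasing) (auto simp: gam_def nuu_def)

lemma bet_antimono:
  assumes "1 \<le> k" "k \<le> k'" "k' \<le> n"
  shows "bet n k' \<le> bet n k"
proof (cases "k' = k")
  case False
  then have "2 \<le> n"
    using assms by auto
  then show ?thesis
    unfolding bet_eq[OF \<open>2 \<le> n\<close>] using four_le_dim[OF \<open>2 \<le> n\<close>] assms
    by (intro beta_fun_mono power_decreasing) (auto simp: gam_def)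
qed simp

lemma alph_mono:
  assumes "1 \<le> k" "k \<le> n" "n \<le> n'"
  shows "alph n k \<le> alph n' k"
proof (cases "k = 1")
  case True
  then show ?thesis
    unfolding alph_eq using two_le_dim[of n] dim_mono assms
    by (simp add: gam_def nuu_def alpha_fun_one_mono)
next
  case False
  then have k: "2 \<le> k"
    using assms by simp
  have "4 \<le> dim n"
    using four_le_dim k assms by simp
  have "9 * nuu ^ k \<le> 4 * gam ^ k"
    using nuu_power_le_gam_power[OF k] by (simp add: power2_eq_square)
  show ?thesis
    using assms(3)
  proof (induction n' rule: dec_induct)
    case (step m)
    have "alph m k \<le> alph (Suc m) k"
      unfolding alph_eq dim_Suc
      using \<open>4 \<le> dim n\<close> \<open>9 * nuu ^ k \<le> 4 * gam ^ k\<close> dim_mono[OF step(1)]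
      by (intro alpha_fun_le_double) (auto simp: gam_def)
    with step(3) show ?case
      by linarith
  qed simp
qed

lemma bet_mono:
  assumes "1 \<le> k" "k \<le> n" "n \<le> n'"
  shows "bet n k \<le> bet n' k"
proof (cases "k = 1")
  case True
  show ?thesis
    unfolding True bet_one using two_le_dim[of n] dim_mono assms by (intro beta1_fun_mono) auto
next
  case False
  then have "2 \<le> n" "2 \<le> n'"
    using assms by auto
  have "gam ^ k \<le> gam ^ 2"
    using False assms by (intro power_decreasing) (auto simp: gam_def)
  then show ?thesis
    unfolding bet_eq[OF \<open>2 \<le> n\<close>] bet_eq[OF \<open>2 \<le> n'\<close>]
    using four_le_dim[OF \<open>2 \<le> n\<close>] dim_mono[OF assms(3)]
    by (intro beta_fun_mono_dim) (auto simp: gam_def power2_eq_square)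
qed

lemma alph_submult:
  assumes "1 \<le> k" "k < n"
  shows "alph n 1 * alph n k \<le> alph n (Suc k)"
proof -
  define d x y where "d = dim n" and "x = gam ^ k" and "y = nuu ^ k"
  have d: "4 \<le> d"
    unfolding d_def using four_le_dim assms by simp
  (* For k >= 2 the ratio x/y >= 9/4 suffices; for k = 1 it is only 3/2 and d >= 4 is used. *)
  have "4 * (d + 1) * (d + 2) \<le> d^2 * (3 * d + 1) * x - 3 * d * (d^2 - 3 * d - 2) * y"
  proof (cases "k = 1")
    case True
    have "d^2 * (3 * d + 1) * (3/4) - 3 * d * (d^2 - 3 * d - 2) * (1/2) - 4 * (d + 1) * (d + 2)
        = (d - 4) * (3/4 * d^2 + 17/4 * d + 8) + 24"
      by algebra
    moreover have "0 \<le> (d - 4) * (3/4 * d^2 + 17/4 * d + 8)"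
      using d by simp
    ultimately show ?thesis
      unfolding x_def y_def True by (simp add: gam_def nuu_def)
  next
    case False
    have "(2::real) ^ 1 \<le> 2 ^ (n - k)"
      using assms by (intro power_increasing) auto
    then have "2 \<le> d * y"
      unfolding d_def y_def using dim_mult_nuu_power[of k n] assms by simp
    moreover have "9 * y \<le> 4 * x"
      unfolding x_def y_def using nuu_power_le_gam_power[of 2 k] False assms
      by (simp add: power2_eq_square)
    ultimately have "0 \<le> d^2 * (3 * d + 1) * (x - 9/4 * y)" "0 \<le> (d * y - 2) * (15/4 * d^2 + 45/4 * d + 6)"
      using d by auto
    moreover have "d^2 * (3 * d + 1) * x - 3 * d * (d^2 - 3 * d - 2) * y - 4 * (d + 1) * (d + 2)
        = d^2 * (3 * d + 1) * (x - 9/4 * y) + (d * y - 2) * (15/4 * d^2 + 45/4 * d + 6)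
          + 7/2 * d^2 + 21/2 * d + 4"
      by algebra
    moreover have "0 \<le> d^2"
      by simp
    ultimately show ?thesis
      using d by linarith
  qed
  then have "alpha_fun d (3/4) (1/2) * alpha_fun d x y \<le> alpha_fun d (3/4 * x) (y / 2)"
    using d by (intro alpha_fun_submult) auto
  then show ?thesis
    unfolding alph_eq d_def x_def y_def by (simp add: gam_def nuu_def)
qed

lemma alph_one_power_le_alph:
  assumes "1 \<le> k" "k \<le> n"
  shows "alph n 1 ^ k \<le> alph n k"
  using assms
proof (induction k rule: dec_induct)
  case (step m)
  have "alph n 1 ^ Suc m = alph n 1 * alph n 1 ^ m"
    by simp
  also have "\<dots> \<le> alph n 1 * alph n m"
    using step alph_bounds[of 1 n] by (intro mult_left_mono) auto
  also have "\<dots> \<le> alph n (Suc m)"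
    using step by (intro alph_submult) auto
  finally show ?case .
qed simp

lemma bet_le_bet_one_power:
  assumes "1 \<le> k" "k \<le> n"
  shows "bet n k \<le> bet n 1 ^ k"
  using assms
proof (induction k rule: dec_induct)
  case (step m)
  then have "2 \<le> n"
    by simp
  have "bet n (Suc m) = beta_fun (dim n) (3/4 * gam ^ m)"
    unfolding bet_eq[OF \<open>2 \<le> n\<close>] by (simp add: gam_def)
  also have "\<dots> \<le> beta1_fun (dim n) * beta_fun (dim n) (gam ^ m)"
    using four_le_dim[OF \<open>2 \<le> n\<close>] gam_power_le[OF step(1)] by (intro beta_fun_submult) auto
  also have "\<dots> = bet n 1 * bet n m"
    unfolding bet_one bet_eq[OF \<open>2 \<le> n\<close>] ..
  also have "\<dots> \<le> bet n 1 * bet n 1 ^ m"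
    using step bet_bounds[of 1 n] by (intro mult_left_mono) auto
  finally show ?case
    by simp
qed simp

lemma alph_one:
  assumes "1 \<le> n"
  shows "alph n 1 = (3 * (dim n)^2 - 3 * dim n - 4) / (4 * ((dim n)^2 - 1))"
  unfolding alph_eq using alpha_fun_one[of "dim n"] two_le_dim[OF assms] by (simp add: gam_def nuu_def)

lemma alph_one_eq_gam:
  assumes "1 \<le> n"
  shows "alph n 1 = gam * (1 - (3 * dim n + 1) / (3 * ((dim n)^2 - 1)))"
proof -
  have "1 < (dim n)^2"
    using two_le_dim[OF assms] one_less_power[of "dim n" 2] by simp
  then show ?thesis
    unfolding alph_one[OF assms] gam_def by (simp add: field_simps)
qed

lemma bet_one_minus_alph_one:
  assumes "1 \<le> n"
  shows "bet n 1 - alph n 1 = gam * (dim n / ((dim n)^2 - 1))"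
  unfolding alph_one[OF assms] bet_one beta1_fun_def gam_def by (simp add: diff_divide_distrib[symmetric])

lemma alph_one_power_lower_bound:
  assumes "1 \<le> n"
  shows "gam ^ m * (1 - real m * (3 * dim n + 1) / (3 * ((dim n)^2 - 1))) \<le> alph n 1 ^ m"
proof -
  define \<delta> where "\<delta> = (3 * dim n + 1) / (3 * ((dim n)^2 - 1))"
  have "2 * dim n \<le> (dim n)^2"
    using two_le_dim[OF assms] mult_right_mono[of 2 "dim n" "dim n"] by (simp add: power2_eq_square)
  then have "\<delta> \<le> 1"
    unfolding \<delta>_def using two_le_dim[OF assms] by (simp add: divide_le_eq_1)
  then have "1 - real m * \<delta> \<le> (1 - \<delta>) ^ m"
    using Bernoulli_inequality[of "- \<delta>" m] by simp
  then have "gam ^ m * (1 - real m * \<delta>) \<le> (gam * (1 - \<delta>)) ^ m"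
    unfolding power_mult_distrib by (intro mult_left_mono) (simp_all add: gam_def)
  then show ?thesis
    unfolding alph_one_eq_gam[OF assms] \<delta>_def by simp
qed

lemma bet_one_power_upper_bound:
  assumes "1 \<le> n"
  shows "bet n 1 ^ m \<le> alph n 1 ^ m + real m * dim n / ((dim n)^2 - 1) * gam ^ m"
proof (cases m)
  case (Suc j)
  have "bet n 1 ^ Suc j - alph n 1 ^ Suc j \<le> real (Suc j) * (bet n 1 - alph n 1) * gam ^ j"
    using alph_bounds[of 1 n] bet_bounds[of 1 n] alph_le_bet[of 1 n] assms
    by (intro power_diff_le) auto
  then show ?thesis
    unfolding Suc bet_one_minus_alph_one[OF assms] by (simp add: algebra_simps)
qed simp

theorem mainTheorem12:
  fixes n k l :: nat
  assumes "1 \<le> k" and "k \<le> n"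
  shows "(\<forall>n'. n \<le> n' \<longrightarrow> alph n k \<le> alph n' k \<and> bet n k \<le> bet n' k)
    \<and> (\<forall>k'. k \<le> k' \<and> k' \<le> n \<longrightarrow> alph n k' \<le> alph n k \<and> bet n k' \<le> bet n k)
    \<and> (\<lambda>m. alph m k) \<longlonglongrightarrow> gam ^ k
    \<and> (\<lambda>m. bet m k) \<longlonglongrightarrow> gam ^ k
    \<and> 0 < alph n k \<and> alph n k < gam ^ k
    \<and> 0 < bet n k \<and> bet n k < gam ^ k
    \<and> gam ^ (k * l) * (1 - real (k * l) * (3 * dim n + 1) / (3 * ((dim n)^2 - 1)))
        \<le> alph n 1 ^ (k * l)
    \<and> alph n 1 ^ (k * l) \<le> alph n k ^ l
    \<and> alph n k ^ l \<le> bet n k ^ l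
    \<and> bet n k ^ l \<le> bet n 1 ^ (k * l)
    \<and> bet n 1 ^ (k * l) \<le> alph n 1 ^ (k * l) + real (k * l) * dim n / ((dim n)^2 - 1) * gam ^ (k * l)"
proof -
  have n: "1 \<le> n"
    using assms by simp
  have "alph n 1 ^ (k * l) \<le> alph n k ^ l"
    unfolding power_mult using alph_one_power_le_alph[OF assms] alph_bounds[of 1 n] n
    by (intro power_mono) auto
  moreover have "alph n k ^ l \<le> bet n k ^ l"
    using alph_le_bet[OF assms] alph_bounds[OF assms] by (intro power_mono) auto
  moreover have "bet n k ^ l \<le> bet n 1 ^ (k * l)"
    unfolding power_mult using bet_le_bet_one_power[OF assms] bet_bounds[OF assms]
    by (intro power_mono) auto
  ultimately show ?thesis
    using alph_mono[OF assms] bet_mono[OF assms] alph_antimono[OF n] bet_antimono[OF assms(1)]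
      alph_tendsto bet_tendsto alph_bounds[OF assms] bet_bounds[OF assms]
      alph_one_power_lower_bound[OF n] bet_one_power_upper_bound[OF n]
    by blast
qed

end
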